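(* Let $\varphi:\mathbb{R}^n\to\mathbb{R}$ be concave and increasing. For any $\vec q_0\in\mathbb{R}^n$, the function $C:\mathbb{R}^n\to\mathbb{R}$, \[C(\vec q)=\inf\{c\in\mathbb{R}\mid \varphi(c\mathbf 1-\vec q)\ge\varphi(\vec q_0)\},\] is convex, increasing and $\mathbf 1$-invariant. Furthermore, for every history $h\in\mathsf{ValHist}_\varphi((\vec q_0))$ we have $\mathsf{ValTrades}'_C(h)=\mathsf{ValTrades}_\varphi(h)$.
   Context: $\mathbf 1=(1,\dots,1)\in\mathbb{R}^n$. A function $f$ is $\mathbf 1$-invariant if $f(\vec q+\alpha\mathbf 1)=f(\vec q)+\alpha$ for all $\vec q,\alpha$; increasing if $f(\vec q)>f(\vec q')$ whenever $\vec q\succeq\vec q'$ coordinatewise and $\vec q\neq\vec q'$. A history $h$ is a finite list of vectors in $\mathbb{R}^n$, $\vec q_h$ is their sum, and $h\oplus\vec r$ is $h$ with $\vec r$ appended. The CFMM for $\varphi$ is $\mathsf{ValTrades}_\varphi(h)=\{\vec r\mid\varphi(\vec q_h+\vec r)=\varphi(\vec q_h)\}$, and $\mathsf{ValHist}_\varphi((\vec q_0))$ is the smallest set of histories containing the one-element history $(\vec q_0)$ and closed under $h\mapsto h\oplus\vec r$ for $\vec r\in\mathsf{ValTrades}_\varphi(h)$. The cashless cost-function market maker for $C$ is $\mathsf{ValTrades}'_C(h)=\{\vec r+\alpha\mathbf 1\mid\vec r\in\mathbb{R}^n,\ \alpha=C(-\vec q_h-\vec r)-C(-\vec q_h)\}$.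 *)

theory Defs
  imports "HOL-Analysis.Analysis"
begin

definition onevec :: "real ^ 'n" where
  "onevec = (\<chi> i. 1)"

definition one_invariant :: "(real ^ 'n \<Rightarrow> real) \<Rightarrow> bool" where
  "one_invariant f \<longleftrightarrow> (\<forall>q \<alpha>. f (q + \<alpha> *\<^sub>R onevec) = f q + \<alpha>)"

definition increasing_fun :: "(real ^ 'n \<Rightarrow> real) \<Rightarrow> bool" where
  "increasing_fun f \<longleftrightarrow>
     (\<forall>q q'. (\<forall>i. q $ i \<ge> q' $ i) \<and> q \<noteq> q' \<longrightarrow> f q > f q')"

text \<open>A history is a finite list of vectors; its position is their sum.\<close>
definition qh :: "(real ^ 'n) list \<Rightarrow> real ^ 'n" where
  "qh h = sum_list h"

definition ValTrades :: "(real ^ 'n \<Rightarrow> real) \<Rightarrow> (real ^ 'n) list \<Rightarrow> (real ^ 'n) set" where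
  "ValTrades \<phi> h = {r. \<phi> (qh h + r) = \<phi> (qh h)}"

inductive_set ValHist :: "(real ^ 'n \<Rightarrow> real) \<Rightarrow> real ^ 'n \<Rightarrow> (real ^ 'n) list set"
  for \<phi> :: "real ^ 'n \<Rightarrow> real" and q0 :: "real ^ 'n" where
  init: "[q0] \<in> ValHist \<phi> q0"
| step: "h \<in> ValHist \<phi> q0 \<Longrightarrow> r \<in> ValTrades \<phi> h \<Longrightarrow> h @ [r] \<in> ValHist \<phi> q0"

definition ValTrades' :: "(real ^ 'n \<Rightarrow> real) \<Rightarrow> (real ^ 'n) list \<Rightarrow> (real ^ 'n) set" where
  "ValTrades' C h = {r + \<alpha> *\<^sub>R onevec | r \<alpha>. \<alpha> = C (- qh h - r) - C (- qh h)}"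

definition costfun :: "(real ^ 'n \<Rightarrow> real) \<Rightarrow> real ^ 'n \<Rightarrow> real ^ 'n \<Rightarrow> real" where
  "costfun \<phi> q0 q = Inf {c :: real. \<phi> (c *\<^sub>R onevec - q) \<ge> \<phi> q0}"

end

theory Submission
  imports Defs
begin

text \<open>Write \<open>C = costfun \<phi> q0\<close>. Since \<phi> is continuous and strictly increasing along the
  diagonal direction \<open>onevec\<close>, \<open>C q\<close> is the unique \<open>c\<close> with \<open>\<phi> (c \<one> - q) = \<phi> q0\<close>.
  Shifting \<open>q\<close> along the diagonal shifts this \<open>c\<close> by the same amount; monotonicity and
  convexity of \<open>C\<close> are inherited from monotonicity and concavity of \<phi>. Along a valid history
  \<phi> stays at level \<open>\<phi> q0\<close>, so \<open>C (- q\<^sub>h) = 0\<close>, and by \<open>\<one>\<close>-invariance the cashless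
  trades are exactly those keeping \<open>C (- q\<^sub>h - r) = 0\<close>, i.e. keeping \<phi> on that level.\<close>

lemma onevec_nth [simp]: "onevec $ i = 1"
  by (simp add: onevec_def)

lemma increasing_fun_iff_strict_mono: "increasing_fun f \<longleftrightarrow> strict_mono f"
  unfolding increasing_fun_def strict_mono_def order.strict_iff_order less_eq_vec_def
  by blast

lemma strict_mono_diagonal: "strict_mono (\<lambda>c. c *\<^sub>R onevec - q :: real ^ 'n)"
  by (auto simp: strict_mono_def less_vec_def less_eq_vec_def)

lemma concave_on_imp_continuous_on:
  fixes f :: "'a::euclidean_space \<Rightarrow> real"
  assumes "open S" "concave_on S f"
  shows "continuous_on S f"
  using continuous_on_minus[OF convex_on_continuous[OF assms(1), of "\<lambda>x. - f x"]] assms(2)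
  by (simp add: concave_on_def)

lemma Inf_superlevel_strict_mono:
  fixes g :: "real \<Rightarrow> 'a::linorder"
  assumes "strict_mono g"
  shows "Inf {c. g c0 \<le> g c} = c0"
proof -
  have "{c. g c0 \<le> g c} = {c0..}"
    using strict_mono_less_eq[OF assms] by auto
  then show ?thesis by simp
qed

lemma diagonal_level_exists:
  fixes \<phi> :: "real ^ 'n \<Rightarrow> real"
  assumes "continuous_on UNIV \<phi>" "mono \<phi>"
  shows "\<exists>c. \<phi> (c *\<^sub>R onevec - q) = \<phi> p"
proof -
  define U where "U = norm p + norm q"
  have "\<bar>p $ i + q $ i\<bar> \<le> U" for i
    unfolding U_def by (intro abs_triangle_ineq[THEN order.trans] add_mono component_le_norm_cart)
  then have "(- U) *\<^sub>R onevec - q \<le> p \<and> p \<le> U *\<^sub>R onevec - q"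
    by (auto simp: less_eq_vec_def abs_le_iff; smt (verit))
  then have "\<phi> ((- U) *\<^sub>R onevec - q) \<le> \<phi> p" "\<phi> p \<le> \<phi> (U *\<^sub>R onevec - q)"
    using assms(2) by (auto dest: monoD)
  moreover have "continuous_on {- U..U} (\<lambda>c. \<phi> (c *\<^sub>R onevec - q))"
    by (rule continuous_on_compose2[OF assms(1)]) (auto intro!: continuous_intros)
  moreover have "- U \<le> U"
    by (simp add: U_def)
  ultimately show ?thesis
    using IVT'[of "\<lambda>c. \<phi> (c *\<^sub>R onevec - q)"] by blast
qed

context
  fixes \<phi> :: "real ^ 'n \<Rightarrow> real" and q0 :: "real ^ 'n"
  assumes continuous_\<phi>: "continuous_on UNIV \<phi>" and strict_mono_\<phi>: "strict_mono \<phi>"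
begin

lemma strict_mono_along_diagonal: "strict_mono (\<lambda>c. \<phi> (c *\<^sub>R onevec - q))"
  by (rule strict_monoI) (intro strict_monoD[OF strict_mono_\<phi>] strict_monoD[OF strict_mono_diagonal])

lemma costfun_eq_iff: "costfun \<phi> q0 q = c \<longleftrightarrow> \<phi> (c *\<^sub>R onevec - q) = \<phi> q0"
proof -
  obtain c0 where c0: "\<phi> (c0 *\<^sub>R onevec - q) = \<phi> q0"
    using diagonal_level_exists[OF continuous_\<phi> strict_mono_mono[OF strict_mono_\<phi>]] by blast
  then have "costfun \<phi> q0 q = c0"
    using Inf_superlevel_strict_mono[OF strict_mono_along_diagonal, of c0 q] by (simp add: costfun_def)
  then show ?thesis
    using c0 strict_mono_eq[OF strict_mono_along_diagonal, of c q c0] by auto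
qed

lemma costfun_level: "\<phi> (costfun \<phi> q0 q *\<^sub>R onevec - q) = \<phi> q0"
  using costfun_eq_iff[THEN iffD1, OF refl] .

lemma costfun_one_invariant: "one_invariant (costfun \<phi> q0)"
  unfolding one_invariant_def costfun_eq_iff
  using costfun_level by (simp add: algebra_simps)

lemma costfun_strict_mono: "strict_mono (costfun \<phi> q0)"
proof (rule strict_monoI)
  fix q q' :: "real ^ 'n"
  assume "q < q'"
  let ?c = "costfun \<phi> q0 q'"
  have "\<phi> (costfun \<phi> q0 q *\<^sub>R onevec - q) = \<phi> (?c *\<^sub>R onevec - q')"
    by (simp add: costfun_level)
  also have "\<dots> < \<phi> (?c *\<^sub>R onevec - q)"
    using \<open>q < q'\<close> by (intro strict_monoD[OF strict_mono_\<phi>]) (auto simp: less_vec_def less_eq_vec_def)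
  finally show "costfun \<phi> q0 q < ?c"
    using strict_mono_less[OF strict_mono_along_diagonal] by blast
qed

lemma costfun_convex_on:
  assumes "concave_on UNIV \<phi>"
  shows "convex_on UNIV (costfun \<phi> q0)"
proof (rule convex_onI)
  fix t :: real and x y :: "real ^ 'n"
  assume t: "0 < t" "t < 1"
  let ?C = "costfun \<phi> q0" and ?z = "(1 - t) *\<^sub>R x + t *\<^sub>R y"
  define c where "c = (1 - t) * ?C x + t * ?C y"
  have "\<phi> q0 = (1 - t) * \<phi> (?C x *\<^sub>R onevec - x) + t * \<phi> (?C y *\<^sub>R onevec - y)"
    by (simp add: costfun_level algebra_simps)
  also have "\<dots> \<le> \<phi> ((1 - t) *\<^sub>R (?C x *\<^sub>R onevec - x) + t *\<^sub>R (?C y *\<^sub>R onevec - y))"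
    using concave_onD[OF assms, of t] t by auto
  also have "\<dots> = \<phi> (c *\<^sub>R onevec - ?z)"
    by (simp add: c_def algebra_simps)
  finally have "\<phi> (?C ?z *\<^sub>R onevec - ?z) \<le> \<phi> (c *\<^sub>R onevec - ?z)"
    by (simp add: costfun_level)
  then show "?C ?z \<le> (1 - t) * ?C x + t * ?C y"
    unfolding c_def using strict_mono_less_eq[OF strict_mono_along_diagonal] by blast
qed simp

lemma costfun_minus_at_level:
  assumes "\<phi> q = \<phi> q0"
  shows "costfun \<phi> q0 (- q) = 0"
  using assms by (simp add: costfun_eq_iff)

end

lemma ValTrades'_one_invariant:
  fixes C :: "real ^ 'n \<Rightarrow> real"
  assumes "one_invariant C"
  shows "ValTrades' C h = {s. C (- qh h - s) = C (- qh h)}"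
  unfolding ValTrades'_def
proof safe
  fix r :: "real ^ 'n"
  show "C (- qh h - (r + (C (- qh h - r) - C (- qh h)) *\<^sub>R onevec)) = C (- qh h)"
    using assms[unfolded one_invariant_def, rule_format, of "- qh h - r" "C (- qh h) - C (- qh h - r)"]
    by (simp add: algebra_simps)
next
  fix s :: "real ^ 'n"
  assume "C (- qh h - s) = C (- qh h)"
  then have "s = s + (C (- qh h - s) - C (- qh h)) *\<^sub>R onevec"
    by simp
  then show "\<exists>r \<alpha>. s = r + \<alpha> *\<^sub>R onevec \<and> \<alpha> = C (- qh h - r) - C (- qh h)"
    by blast
qed

lemma ValHist_level: "h \<in> ValHist \<phi> q0 \<Longrightarrow> \<phi> (qh h) = \<phi> q0"
  by (induction rule: ValHist.induct) (auto simp: qh_def ValTrades_def)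

lemma ValTrades'_costfun:
  fixes \<phi> :: "real ^ 'n \<Rightarrow> real"
  assumes "continuous_on UNIV \<phi>" "strict_mono \<phi>" "\<phi> (qh h) = \<phi> q0"
  shows "ValTrades' (costfun \<phi> q0) h = ValTrades \<phi> h"
proof -
  have "costfun \<phi> q0 (- qh h - s) = costfun \<phi> q0 (- qh h) \<longleftrightarrow> \<phi> (qh h + s) = \<phi> (qh h)" for s
    using assms by (simp add: costfun_minus_at_level costfun_eq_iff add.commute)
  then show ?thesis
    unfolding ValTrades'_one_invariant[OF costfun_one_invariant[OF assms(1,2)]] ValTrades_def
    by simp
qed

theorem theorem3p4:
  fixes \<phi> :: "real ^ 'n \<Rightarrow> real" and q0 :: "real ^ 'n"
  assumes "concave_on UNIV \<phi>" and "increasing_fun \<phi>"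
  shows "convex_on UNIV (costfun \<phi> q0) \<and> increasing_fun (costfun \<phi> q0)
         \<and> one_invariant (costfun \<phi> q0)
         \<and> (\<forall>h \<in> ValHist \<phi> q0. ValTrades' (costfun \<phi> q0) h = ValTrades \<phi> h)"
proof -
  have continuous_\<phi>: "continuous_on UNIV \<phi>"
    using concave_on_imp_continuous_on[OF open_UNIV assms(1)] .
  have strict_mono_\<phi>: "strict_mono \<phi>"
    using assms(2) by (simp add: increasing_fun_iff_strict_mono)
  show ?thesis
    using costfun_convex_on[OF continuous_\<phi> strict_mono_\<phi> assms(1)]
      costfun_strict_mono[OF continuous_\<phi> strict_mono_\<phi>]
      costfun_one_invariant[OF continuous_\<phi> strict_mono_\<phi>]
      ValTrades'_costfun[OF continuous_\<phi> strict_mono_\<phi> ValHist_level[of _ \<phi> q0]]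
    by (simp add: increasing_fun_iff_strict_mono)
qed

end
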